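(* Let $D$ be a normalized 2-page book drawing of $K_n$, let $D_1$ be the drawing of $K_{n-1}$ obtained by deleting vertex $n$ and its incident edges, and let $p$ be an integer with $0\le p\le\lfloor n/2\rfloor-2$. Suppose that $E_{\le k}(D,D_1)=\binom{k+2}2$ for all $0\le k\le p$. Then for each $1\le i\le p+1$, row $i$ of $M(D)$ contains exactly one entry representing a $(D,D_1)$-invariant $k$-edge for each $k$ with $i-1\le k\le p$, and no entry representing a $(D,D_1)$-invariant $j$-edge with $j\le i-2$; and every row $i$ with $i\ge p+2$ contains no entry representing a $(D,D_1)$-invariant $j$-edge with $j\le p$.
   Context: Normalized 2-page book drawing of $K_n$: vertices $(1,0),\dots,(n,0)$ labelled $1,\dots,n$; edges $i(i+1)$ on the spine; edge $1n$ in the upper half-plane; every other edge $ij$ a semicircle over $[i,j]$ in the upper or lower half-plane. $M(D)$ has entries $(i,j)$, $1\le i<j\le n$ (row $i$, column $j$), entry $(i,j)$ representing edge $ij$. In a good drawing of $K_m$, for distinct vertices $p,q,r$, $r$ is on the left (right) of $\overrightarrow{pq}$ if the triangle with edges $pq,qr,rp$ traced in order $p,q,r$ is counterclockwise (clockwise); an edge is a $k$-edge if exactly $k$ of the other $m-2$ vertices lie on one side of it, and it has a unique such index in $\{0,\dots,\lfloor m/2\rfloor-1\}$. An edge $ij$ of $D$ not incident to $n$ is a $(D,D_1)$-invariant $k$-edge if its index in $D$ is $k$ and it is also a $k$-edge in $D_1$ (exactly $k$ vertices of $D_1$ on one side). $E_{\le k}(D,D_1)$ is the number of $(D,D_1)$-invariant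 $j$-edges with $0\le j\le k$. *)

theory Defs
  imports Main
begin

text \<open>A 2-page book drawing of K_n with vertices 1..n on the spine (in this order)
is encoded by a predicate up: for i < j, up i j says that the edge ij is drawn as a
semicircle in the upper half-plane (otherwise in the lower half-plane).  For spine
edges i(i+1) the value of up is irrelevant (never consulted).\<close>

definition normalized_book_drawing :: "nat \<Rightarrow> (nat \<Rightarrow> nat \<Rightarrow> bool) \<Rightarrow> bool" where
  "normalized_book_drawing n up \<longleftrightarrow> 3 \<le> n \<and> up 1 n"

text \<open>With a < b < c the sorted vertices, traversing a,b,c goes rightwards along the edges
ab, bc and returns along the arc ac; this is counterclockwise iff ac is in the upper
page.  Cyclic shifts keep the orientation, other permutations reverse it.\<close>

definition ccw_book :: "(nat \<Rightarrow> nat \<Rightarrow> bool) \<Rightarrow> nat \<Rightarrow> nat \<Rightarrow> nat \<Rightarrow> bool" where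
  "ccw_book up p q r =
     (let a = min p (min q r); c = max p (max q r) in
      if (p < q \<and> q < r) \<or> (q < r \<and> r < p) \<or> (r < p \<and> p < q) then up a c else \<not> up a c)"

definition left_count :: "(nat \<Rightarrow> nat \<Rightarrow> bool) \<Rightarrow> nat set \<Rightarrow> nat \<Rightarrow> nat \<Rightarrow> nat" where
  "left_count up V p q = card {r \<in> V - {p, q}. ccw_book up p q r}"

definition is_kedge :: "(nat \<Rightarrow> nat \<Rightarrow> bool) \<Rightarrow> nat set \<Rightarrow> nat \<Rightarrow> nat \<Rightarrow> nat \<Rightarrow> bool" where
  "is_kedge up V k p q \<longleftrightarrow>
     left_count up V p q = k \<or> card V - 2 - left_count up V p q = k"

definition edge_index :: "(nat \<Rightarrow> nat \<Rightarrow> bool) \<Rightarrow> nat set \<Rightarrow> nat \<Rightarrow> nat \<Rightarrow> nat" where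
  "edge_index up V p q = min (left_count up V p q) (card V - 2 - left_count up V p q)"

definition inv_kedge :: "nat \<Rightarrow> (nat \<Rightarrow> nat \<Rightarrow> bool) \<Rightarrow> nat \<Rightarrow> nat \<Rightarrow> nat \<Rightarrow> bool" where
  "inv_kedge n up k i j \<longleftrightarrow>
     1 \<le> i \<and> i < j \<and> j < n \<and>
     edge_index up {1..n} i j = k \<and> is_kedge up {1..n-1} k i j"

definition E_le :: "nat \<Rightarrow> (nat \<Rightarrow> nat \<Rightarrow> bool) \<Rightarrow> nat \<Rightarrow> nat" where
  "E_le n up k = card {(i, j). \<exists>k'\<le>k. inv_kedge n up k' i j}"

end

theory Submission
  imports Defs
begin

text \<open>For \<open>i < j < n\<close> the triangle \<open>i, j, n\<close> is counterclockwise exactly when the arc \<open>in\<close>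
is on the upper page, so \<open>up i n\<close> tells on which side of \<open>ij\<close> the vertex \<open>n\<close> lies.  As long as
\<open>2k + 4 \<le> n\<close>, the edge \<open>ij\<close> is a \<open>(D,D\<^sub>1)\<close>-invariant \<open>k\<close>-edge exactly when \<open>k\<close> vertices of
\<open>D\<^sub>1\<close> lie on the side of \<open>ij\<close> opposite to \<open>n\<close>.  Sorting the vertices right of \<open>i\<close> by a
suitable key shows that row \<open>i\<close> has at least \<open>k + 2 - i\<close> entries with at most \<open>k\<close> such
vertices, so \<open>E\<^sub>\<le>\<^sub>k(D,D\<^sub>1) \<ge> C(k+2,2)\<close>.  The hypothesis forces equality in every row, and
taking differences in \<open>k\<close> gives exactly one invariant \<open>k\<close>-edge per row \<open>i \<le> k + 1\<close>.\<close>

lemma sum_descending_eq_choose_two: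
  assumes "k + 2 \<le> m"
  shows "(\<Sum>i = 1..<m. k + 2 - i) = (k + 2) choose 2"
proof -
  have "(\<Sum>i = 1..<m. k + 2 - i) = (\<Sum>i = 1..k + 1. k + 2 - i)"
    using assms by (intro sum.mono_neutral_right) auto
  also have "\<dots> = (\<Sum>i = 1..k + 1. i)"
    by (rule sum.reindex_bij_witness[of _ "\<lambda>i. k + 2 - i" "\<lambda>i. k + 2 - i"]) auto
  also have "\<dots> = (\<Sum>i\<le>k + 1. i choose 1)"
    by (rule sum.mono_neutral_cong_left) auto
  also have "\<dots> = (k + 2) choose 2"
    by (subst sum_choose_upper) (simp add: numeral_2_eq_2)
  finally show ?thesis .
qed

lemma card_rank_less:
  fixes f :: "'a \<Rightarrow> 'b::linorder"
  assumes "finite A" "inj_on f A"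
  shows "card {x \<in> A. card {y \<in> A. f y < f x} < c} = min c (card A)"
proof -
  define rank where "rank x = card {y \<in> A. f y < f x}" for x
  have rank_mono: "rank x < rank y" if "x \<in> A" "y \<in> A" "f x < f y" for x y
    unfolding rank_def using that assms(1) by (intro psubset_card_mono) auto
  have "inj_on rank A"
  proof (rule inj_onI)
    fix x y assume "x \<in> A" "y \<in> A" "rank x = rank y"
    then show "x = y"
      using rank_mono[of x y] rank_mono[of y x] assms(2) by (metis inj_onD linorder_cases less_irrefl)
  qed
  moreover have "rank ` A \<subseteq> {..<card A}"
    unfolding rank_def using assms(1) by (auto intro!: psubset_card_mono)
  ultimately have image: "rank ` A = {..<card A}"
    by (intro card_subset_eq) (auto simp: card_image)
  have "card {x \<in> A. rank x < c} = card (rank ` {x \<in> A. rank x < c})"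
    using \<open>inj_on rank A\<close> by (intro card_image[symmetric]) (auto intro: inj_on_subset)
  also have "rank ` {x \<in> A. rank x < c} = rank ` A \<inter> {..<c}"
    by auto
  also have "\<dots> = {..<min c (card A)}"
    unfolding image by auto
  finally show ?thesis by (simp add: rank_def)
qed

definition opposite_count :: "nat \<Rightarrow> (nat \<Rightarrow> nat \<Rightarrow> bool) \<Rightarrow> nat \<Rightarrow> nat \<Rightarrow> nat" where
  "opposite_count n up i j = card {r \<in> {1..n-1} - {i, j}. ccw_book up i j r \<noteq> up i n}"

lemma ccw_book_right: "i < j \<Longrightarrow> j < r \<Longrightarrow> ccw_book up i j r = up i r"
  by (simp add: ccw_book_def Let_def min_def max_def)

lemma ccw_book_between: "i < r \<Longrightarrow> r < j \<Longrightarrow> ccw_book up i j r = (\<not> up i j)"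
  by (auto simp add: ccw_book_def Let_def min_def max_def)

lemma inv_kedgeD: "inv_kedge n up k i j \<Longrightarrow> 1 \<le> i \<and> i < j \<and> j < n"
  unfolding inv_kedge_def by blast

lemma inv_kedge_unique_index: "inv_kedge n up k i j \<Longrightarrow> inv_kedge n up k' i j \<Longrightarrow> k = k'"
  unfolding inv_kedge_def by blast

lemma inv_kedge_iff_opposite_count:
  assumes "2 * k + 4 \<le> n" and ij: "1 \<le> i" "i < j" "j < n"
  shows "inv_kedge n up k i j \<longleftrightarrow> opposite_count n up i j = k"
proof -
  define X where "X = {1..n-1} - {i, j}"
  define L where "L = card {r \<in> X. ccw_book up i j r}"
  have finX: "finite X" and cardX: "card X = n - 3"
    using ij by (auto simp: X_def card_Diff_subset)
  have "L \<le> n - 3"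
    unfolding L_def using finX cardX by (metis (no_types, lifting) card_mono mem_Collect_eq subsetI)
  have "{1..n} - {i, j} = insert n X" "n \<notin> X"
    using ij by (auto simp: X_def)
  moreover have "ccw_book up i j n = up i n"
    using ij by (simp add: ccw_book_right)
  ultimately have "{r \<in> {1..n} - {i, j}. ccw_book up i j r} =
      (if up i n then insert n {r \<in> X. ccw_book up i j r} else {r \<in> X. ccw_book up i j r})"
    by auto
  then have left_D: "left_count up {1..n} i j = L + (if up i n then 1 else 0)"
    unfolding left_count_def L_def using finX \<open>n \<notin> X\<close> by simp
  have left_D1: "left_count up {1..n-1} i j = L"
    by (simp add: left_count_def L_def X_def)
  have opposite: "opposite_count n up i j = (if up i n then n - 3 - L else L)"
  proof (cases "up i n")
    case True
    then have "{r \<in> X. ccw_book up i j r \<noteq> up i n} = X - {r \<in> X. ccw_book up i j r}"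
      by auto
    then show ?thesis
      using True finX cardX unfolding opposite_count_def X_def[symmetric] L_def
      by (simp add: card_Diff_subset)
  qed (simp add: opposite_count_def L_def X_def)
  have "inv_kedge n up k i j \<longleftrightarrow>
      min (left_count up {1..n} i j) (n - 2 - left_count up {1..n} i j) = k \<and> (L = k \<or> n - 3 - L = k)"
    using ij left_D1 unfolding inv_kedge_def edge_index_def is_kedge_def
    by (simp add: numeral_3_eq_3)
  then show ?thesis
    using left_D opposite \<open>L \<le> n - 3\<close> assms(1) by (cases "up i n") (simp_all, linarith+)
qed

text \<open>Vertices \<open>j > i\<close> whose arc \<open>ij\<close> lies on the page of \<open>in\<close> get a positive key, the others a
negative one; a vertex between \<open>i\<close> and \<open>j\<close> or right of \<open>j\<close> that lies opposite to \<open>n\<close> with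
respect to \<open>ij\<close> then has a smaller key than \<open>j\<close>.\<close>

definition row_key :: "nat \<Rightarrow> (nat \<Rightarrow> nat \<Rightarrow> bool) \<Rightarrow> nat \<Rightarrow> nat \<Rightarrow> int" where
  "row_key n up i j = (if up i j \<noteq> up i n then - int j else int j)"

lemma opposite_count_le_rank:
  assumes "i < j" "j < n"
  shows "opposite_count n up i j \<le> (i - 1) + card {r \<in> {i<..<n}. row_key n up i r < row_key n up i j}"
proof -
  have "{r \<in> {1..n-1} - {i, j}. ccw_book up i j r \<noteq> up i n} \<subseteq>
      {1..<i} \<union> {r \<in> {i<..<n}. row_key n up i r < row_key n up i j}"
  proof
    fix r assume r: "r \<in> {r \<in> {1..n-1} - {i, j}. ccw_book up i j r \<noteq> up i n}"
    then have "1 \<le> r" "r < n" "r \<noteq> i" "r \<noteq> j" and opposite: "ccw_book up i j r \<noteq> up i n"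
      by auto
    consider "r < i" | "i < r" "r < j" | "j < r"
      using \<open>r \<noteq> i\<close> \<open>r \<noteq> j\<close> by linarith
    then show "r \<in> {1..<i} \<union> {r \<in> {i<..<n}. row_key n up i r < row_key n up i j}"
    proof cases
      case 1
      then show ?thesis using \<open>1 \<le> r\<close> by auto
    next
      case 2
      then have "up i j = up i n"
        using opposite ccw_book_between[of i r j up] by auto
      then have "row_key n up i j = int j" "row_key n up i r \<le> int r"
        by (simp_all add: row_key_def)
      then show ?thesis using 2 \<open>r < n\<close> by auto
    next
      case 3
      then have "up i r \<noteq> up i n"
        using opposite ccw_book_right[of i j r up] assms by auto
      then have "row_key n up i r = - int r" "- int j \<le> row_key n up i j"
        by (simp_all add: row_key_def)
      then show ?thesis using 3 assms \<open>r < n\<close> by auto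
    qed
  qed
  then have "opposite_count n up i j \<le> card ({1..<i} \<union> {r \<in> {i<..<n}. row_key n up i r < row_key n up i j})"
    unfolding opposite_count_def by (rule card_mono[rotated]) simp
  also have "\<dots> \<le> (i - 1) + card {r \<in> {i<..<n}. row_key n up i r < row_key n up i j}"
    using card_Un_le[of "{1..<i}"] by simp
  finally show ?thesis .
qed

lemma card_row_opposite_count_le:
  assumes "1 \<le> i" "k + 3 \<le> n"
  shows "k + 2 - i \<le> card {j. i < j \<and> j < n \<and> opposite_count n up i j \<le> k}"
proof -
  let ?J = "{i<..<n}" and ?key = "row_key n up i"
  have "inj_on ?key ?J"
    by (auto simp: inj_on_def row_key_def split: if_splits)
  then have "card {j \<in> ?J. card {r \<in> ?J. ?key r < ?key j} < k + 2 - i} = k + 2 - i"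
    using card_rank_less[of ?J ?key "k + 2 - i"] assms by simp
  moreover have "{j \<in> ?J. card {r \<in> ?J. ?key r < ?key j} < k + 2 - i} \<subseteq>
      {j. i < j \<and> j < n \<and> opposite_count n up i j \<le> k}"
    using opposite_count_le_rank[of i _ n up] assms by fastforce
  ultimately show ?thesis
    by (metis (no_types, lifting) card_mono finite_nat_set_iff_bounded mem_Collect_eq)
qed

definition inv_row :: "nat \<Rightarrow> (nat \<Rightarrow> nat \<Rightarrow> bool) \<Rightarrow> nat \<Rightarrow> nat \<Rightarrow> nat set" where
  "inv_row n up k i = {j. \<exists>k'\<le>k. inv_kedge n up k' i j}"

lemma inv_row_subset: "inv_row n up k i \<subseteq> {i<..<n}"
  unfolding inv_row_def by (auto dest: inv_kedgeD)

lemma finite_inv_row: "finite (inv_row n up k i)"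
  using inv_row_subset by (rule finite_subset) simp

lemma inv_row_eq_opposite_count_le:
  assumes "2 * k + 4 \<le> n" "1 \<le> i"
  shows "inv_row n up k i = {j. i < j \<and> j < n \<and> opposite_count n up i j \<le> k}"
proof -
  have "inv_kedge n up k' i j \<longleftrightarrow> i < j \<and> j < n \<and> opposite_count n up i j = k'"
    if "k' \<le> k" for k' j
    using inv_kedge_iff_opposite_count[of k' n i j up] inv_kedgeD[of n up k' i j] that assms
    by auto
  then show ?thesis
    unfolding inv_row_def by auto
qed

lemma E_le_eq_sum_card_inv_row: "E_le n up k = (\<Sum>i = 1..<n. card (inv_row n up k i))"
proof -
  have "{(i, j). \<exists>k'\<le>k. inv_kedge n up k' i j} = Sigma {1..<n} (inv_row n up k)"
    unfolding inv_row_def by (auto dest: inv_kedgeD)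
  then show ?thesis
    unfolding E_le_def using finite_inv_row by (simp add: card_SigmaI)
qed

lemma card_inv_row_eq:
  assumes "2 * k + 4 \<le> n" "E_le n up k = (k + 2) choose 2" "1 \<le> i" "i < n"
  shows "card (inv_row n up k i) = k + 2 - i"
proof -
  have "(\<Sum>i = 1..<n. k + 2 - i) = (k + 2) choose 2"
    using assms(1) by (intro sum_descending_eq_choose_two) linarith
  then have sums: "(\<Sum>i = 1..<n. k + 2 - i) = (\<Sum>i = 1..<n. card (inv_row n up k i))"
    using assms(2) by (simp add: E_le_eq_sum_card_inv_row)
  have rows: "k + 2 - i' \<le> card (inv_row n up k i')" if "i' \<in> {1..<n}" for i'
    using card_row_opposite_count_le[of i' k n up] inv_row_eq_opposite_count_le[of k n i' up]
      that assms(1) by simp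
  show ?thesis
    using sum_mono_inv[of "\<lambda>i. k + 2 - i" "{1..<n}" "\<lambda>i. card (inv_row n up k i)", OF sums rows]
      assms(3,4) by simp
qed

lemma inv_row_0: "inv_row n up 0 i = {j. inv_kedge n up 0 i j}"
  unfolding inv_row_def by simp

lemma card_inv_row_Suc:
  "card (inv_row n up (Suc k) i) = card (inv_row n up k i) + card {j. inv_kedge n up (Suc k) i j}"
proof -
  have "inv_row n up (Suc k) i = inv_row n up k i \<union> {j. inv_kedge n up (Suc k) i j}"
    unfolding inv_row_def by (auto simp: le_Suc_eq)
  moreover have "inv_row n up k i \<inter> {j. inv_kedge n up (Suc k) i j} = {}"
    unfolding inv_row_def by (fastforce dest: inv_kedge_unique_index)
  moreover have "{j. inv_kedge n up (Suc k) i j} \<subseteq> inv_row n up (Suc k) i"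
    unfolding inv_row_def by blast
  ultimately show ?thesis
    using finite_inv_row[of n up _ i] by (metis card_Un_disjoint finite_subset)
qed

lemma inv_kedge_row_le:
  assumes "inv_kedge n up k i j" "2 * k + 4 \<le> n" "E_le n up k = (k + 2) choose 2"
  shows "i \<le> k + 1"
proof (rule ccontr)
  assume "\<not> i \<le> k + 1"
  moreover have "1 \<le> i" "i < n"
    using inv_kedgeD[OF assms(1)] by auto
  ultimately have "inv_row n up k i = {}"
    using card_inv_row_eq[OF assms(2,3) \<open>1 \<le> i\<close> \<open>i < n\<close>] finite_inv_row[of n up k i] by simp
  with assms(1) show False
    unfolding inv_row_def by blast
qed

lemma card_inv_kedge_row_eq_1:
  assumes "2 * k + 4 \<le> n" "\<forall>k'\<le>k. E_le n up k' = (k' + 2) choose 2" "1 \<le> i" "i \<le> k + 1"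
  shows "card {j. inv_kedge n up k i j} = 1"
proof (cases k)
  case 0
  then show ?thesis
    using card_inv_row_eq[of 0 n up i] inv_row_0[of n up i] assms by simp
next
  case (Suc k')
  have "card (inv_row n up k' i) = k' + 2 - i" "card (inv_row n up k i) = k + 2 - i"
    using card_inv_row_eq[of k' n up i] card_inv_row_eq[of k n up i] assms Suc by auto
  then show ?thesis
    using card_inv_row_Suc[of n up k' i] assms Suc by simp
qed

theorem lemma9:
  fixes n p :: nat and up :: "nat \<Rightarrow> nat \<Rightarrow> bool"
  assumes "normalized_book_drawing n up"
    and "p + 2 \<le> n div 2"
    and "\<forall>k\<le>p. E_le n up k = (k + 2) choose 2"
  shows "(\<forall>i. 1 \<le> i \<and> i \<le> p + 1 \<longrightarrow>
            (\<forall>k. i - 1 \<le> k \<and> k \<le> p \<longrightarrow> (\<exists>!j. inv_kedge n up k i j)) \<and>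
            (\<forall>j k. inv_kedge n up k i j \<longrightarrow> \<not> k + 2 \<le> i))
       \<and> (\<forall>i. p + 2 \<le> i \<longrightarrow> (\<forall>j k. inv_kedge n up k i j \<longrightarrow> \<not> k \<le> p))"
proof -
  have small: "2 * k + 4 \<le> n" if "k \<le> p" for k
    using assms(2) that by linarith
  have row_le: "i \<le> k + 1" if "inv_kedge n up k i j" "k \<le> p" for i j k
    using inv_kedge_row_le[OF that(1) small] assms(3) that(2) by blast
  have unique: "\<exists>!j. inv_kedge n up k i j" if "1 \<le> i" "i \<le> k + 1" "k \<le> p" for i k
  proof -
    have "card {j. inv_kedge n up k i j} = 1"
      using card_inv_kedge_row_eq_1[OF small] assms(3) that by auto
    then show ?thesis
      by (auto simp: card_1_singleton_iff set_eq_iff)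
  qed
  show ?thesis
  proof (intro conjI allI impI)
    fix i k assume "1 \<le> i \<and> i \<le> p + 1" "i - 1 \<le> k \<and> k \<le> p"
    then show "\<exists>!j. inv_kedge n up k i j"
      by (intro unique) auto
  next
    fix i j k assume "1 \<le> i \<and> i \<le> p + 1" "inv_kedge n up k i j"
    then show "\<not> k + 2 \<le> i"
      using row_le by fastforce
  next
    fix i j k assume "p + 2 \<le> i" "inv_kedge n up k i j"
    then show "\<not> k \<le> p"
      using row_le by fastforce
  qed
qed

end
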